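(* Suppose Assumption 1 (see context) holds. Let $C_*=\max_{1\le t\le n}\|\boldsymbol\Sigma_t\|<\infty$, $\iota_2=\iota_1/C_*$ and $\iota_3=\iota_1(1-\rho)/(C_1^2C_* )$. Then for every $u\in\mathbb R^d$ with $\|u\|=1$, \[ \max_{1\le t\le n}\mathsf E\bigl[\exp\{\iota_2(u^\intercal e_t)^2\}\bigr]\le C_0, \qquad \max_{1\le t\le n}\max_{1\le i\le d}\mathsf E\bigl[\exp\{\iota_3x_{t,i}^2\}\bigr]\le C_0^{1/(1-\rho)}<\infty. \]
   Context: The $d$-dimensional series $X_t=(x_{t,1},\dots,x_{t,d})^\intercal$ satisfies $X_t=\mathbf A(\tau_t)X_{t-1}+e_t$, $e_t=\boldsymbol\Sigma_t^{1/2}\varepsilon_t$, $\boldsymbol\Sigma_t=\boldsymbol\Sigma(\tau_t)$, $\tau_t=t/n$, with deterministic matrix functions $\mathbf A(\cdot)$, $\boldsymbol\Sigma(\cdot)$ on $[0,1]$, $\boldsymbol\Omega=\boldsymbol\Sigma^{-1}$, and $(\varepsilon_t)$ i.i.d. with mean zero and identity covariance. Assumption 1: (i) uniformly in $\tau\in[0,1]$, $\det(\mathbf I_d-\mathbf A(\tau)z)\ne0$ for all $z\in\mathbb C$ with $|z|\le1$, and entries of $\mathbf A(\cdot)$ are twice continuously differentiable; (ii) $\boldsymbol\Omega(\tau)$ is positive definite uniformly, $\sup_\tau\|\boldsymbol\Sigma(\tau)\|<\infty$ (operator norm), entries of $\boldsymbol\Sigma,\boldsymbol\Omega$ twice continuously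 differentiable; (iii) there are constants $\iota_1,C_0>0$ with $\mathsf E[\exp\{\iota_1(u^\intercal\varepsilon_t)^2\}]\le C_0$ for every unit $u\in\mathbb R^d$. Standing assumption: $X_t=\sum_{k\ge0}\boldsymbol\Phi_{t,k}e_{t-k}$ with $\max_{0\le t\le n}\|\boldsymbol\Phi_{t,k}\|\le C_1\rho^k$ for all sufficiently large $k$, where $C_1>0$ and $0<\rho<1$ are constants. *)

theory Defs
  imports "HOL-Probability.Probability"
begin

definition psd_mat :: "real^'d^'d \<Rightarrow> bool" where
  "psd_mat S \<longleftrightarrow> transpose S = S \<and> (\<forall>x. 0 \<le> x \<bullet> (S *v x))"

definition matrix_sqrt :: "real^'d^'d \<Rightarrow> real^'d^'d" where
  "matrix_sqrt S = (THE R. psd_mat R \<and> R ** R = S)"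

definition pd_mat :: "real^'d^'d \<Rightarrow> bool" where
  "pd_mat S \<longleftrightarrow> transpose S = S \<and> (\<forall>x. x \<noteq> 0 \<longrightarrow> 0 < x \<bullet> (S *v x))"

definition opnorm :: "real^'d^'m \<Rightarrow> real" where
  "opnorm M = onorm (\<lambda>x. M *v x)"

definition C2_on01 :: "(real \<Rightarrow> real) \<Rightarrow> bool" where
  "C2_on01 f \<longleftrightarrow> (\<exists>f' f''.
     (\<forall>x\<in>{0..1}. (f has_real_derivative f' x) (at x within {0..1})
                \<and> (f' has_real_derivative f'' x) (at x within {0..1}))
     \<and> continuous_on {0..1} f'')"

text \<open>Rescaled time of an integer time index t; pre-sample times t \<le> 0 are
  assigned the rescaled time of t = 1.\<close>
definition tau :: "nat \<Rightarrow> int \<Rightarrow> real" where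
  "tau n t = real_of_int (max t 1) / real n"

end

(*
  Writing e_t = Sigma_t^(1/2) eps_t, one has u'e_t = (Sigma_t^(1/2) u)'eps_t with
  |Sigma_t^(1/2) u|^2 = u'Sigma_t u <= C_*, so the first bound is the sub-Gaussian
  hypothesis on eps_t in a rescaled direction.

  For the second, the causal representation gives x_{t,i} = sum_k b_k'eps_{t-k} with
  |b_k| <= C_1 rho^k C_*^(1/2).  Cauchy-Schwarz with weights rho^k bounds iota_3 x_{t,i}^2
  by sum_k rho^k iota_1 (v_k'eps_{t-k})^2 for unit vectors v_k.  By independence the
  exponential moment of the partial sums factorises, concavity of y |-> y^(rho^k) bounds
  the k-th factor by C_0^(rho^k), and the product is at most C_0^(1/(1-rho)); Fatou's
  lemma passes to the limit.

  The square root Sigma^(1/2) is well defined by the spectral theorem for real symmetric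
  matrices, obtained by maximising the Rayleigh quotient on invariant subspaces.
*)
theory Submission
  imports Defs
begin

section \<open>Symmetric matrices and square roots of positive semidefinite matrices\<close>

lemma transpose_mult_inner:
  fixes A :: "real^'n^'m"
  shows "(transpose A *v u) \<bullet> x = u \<bullet> (A *v x)"
  by (metis dot_lmul_matrix vector_transpose_matrix transpose_transpose)

lemma matrix_vector_mult_component_inner:
  fixes A :: "real^'n^'m"
  shows "(A *v x) $ i = (transpose A *v axis i 1) \<bullet> x"
  by (simp only: transpose_mult_inner inner_axis') simp

lemma symmetric_matrix_inner:
  fixes S :: "real^'n^'n"
  assumes "transpose S = S"
  shows "(S *v x) \<bullet> y = x \<bullet> (S *v y)"
  using transpose_mult_inner[of S, unfolded assms] .

lemma quadratic_nonneg_imp_linear_coeff_zero: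
  fixes a b :: real
  assumes nonneg: "\<And>t. 0 \<le> 2 * t * b + t\<^sup>2 * a" and "0 \<le> a"
  shows "b = 0"
proof (rule ccontr)
  assume "b \<noteq> 0"
  define t where "t = - b / (a + 1)"
  have "2 * t * b + t\<^sup>2 * a = - (b\<^sup>2 * (a + 2)) / (a + 1)\<^sup>2"
    using \<open>0 \<le> a\<close> by (simp add: t_def power2_eq_square divide_simps) (simp add: algebra_simps)
  also have "\<dots> < 0"
    using \<open>b \<noteq> 0\<close> \<open>0 \<le> a\<close> by (intro divide_neg_pos) auto
  finally show False using nonneg[of t] by simp
qed

lemma symmetric_matrix_eigenvector_in_invariant_subspace:
  fixes S :: "real^'n^'n"
  assumes sym: "transpose S = S" and V: "subspace V"
    and inv: "\<And>x. x \<in> V \<Longrightarrow> S *v x \<in> V" and nontrivial: "V \<noteq> {0}"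
  obtains x l where "x \<in> V" "norm x = 1" "S *v x = l *\<^sub>R x"
proof -
  define K where "K = V \<inter> sphere 0 1"
  have "compact K"
    unfolding K_def by (intro closed_Int_compact closed_subspace V compact_sphere)
  obtain y where "y \<in> V" "y \<noteq> 0"
    using nontrivial V subspace_0 by blast
  then have "y /\<^sub>R norm y \<in> K"
    using V by (simp add: K_def subspace_scale)
  then have "K \<noteq> {}" by blast
  have "continuous_on K (\<lambda>x. x \<bullet> (S *v x))"
    by (intro continuous_intros linear_continuous_on matrix_vector_mul_bounded_linear)
  then obtain x where "x \<in> K" and xmax: "\<And>z. z \<in> K \<Longrightarrow> z \<bullet> (S *v z) \<le> x \<bullet> (S *v x)"
    using continuous_attains_sup[OF \<open>compact K\<close> \<open>K \<noteq> {}\<close>] by blast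
  then have xV: "x \<in> V" and nx: "norm x = 1"
    by (auto simp: K_def)
  define l where "l = x \<bullet> (S *v x)"
  have rayleigh: "z \<bullet> (S *v z) \<le> l * (norm z)\<^sup>2" if "z \<in> V" for z
  proof (cases "z = 0")
    case False
    then have "z /\<^sub>R norm z \<in> K"
      using that V by (simp add: K_def subspace_scale)
    from xmax[OF this] show ?thesis
      using False by (simp add: l_def matrix_vector_mult_scaleR field_simps power2_eq_square)
  qed simp
  define w where "w = l *\<^sub>R x - S *v x"
  \<comment> \<open>first-order condition at the maximiser: \<open>w\<close> is orthogonal to \<open>V\<close>\<close>
  have w_orth: "w \<bullet> z = 0" if "z \<in> V" for z
  proof (rule quadratic_nonneg_imp_linear_coeff_zero)
    show "0 \<le> l * (norm z)\<^sup>2 - z \<bullet> (S *v z)"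
      using rayleigh[OF that] by simp
    fix t :: real
    have "x + t *\<^sub>R z \<in> V"
      using xV that V by (simp add: subspace_add subspace_scale)
    from rayleigh[OF this]
    have "(x + t *\<^sub>R z) \<bullet> (S *v (x + t *\<^sub>R z)) \<le> l * (norm (x + t *\<^sub>R z))\<^sup>2" .
    moreover have "(norm (x + t *\<^sub>R z))\<^sup>2 = 1 + 2 * t * (x \<bullet> z) + t\<^sup>2 * (norm z)\<^sup>2"
      using nx unfolding power2_norm_eq_inner norm_eq_1
      by (simp add: inner_add_left inner_add_right inner_commute algebra_simps power2_eq_square)
    moreover have "x \<bullet> (S *v z) = (S *v x) \<bullet> z"
      by (simp add: symmetric_matrix_inner[OF sym])
    ultimately show "0 \<le> 2 * t * (w \<bullet> z) + t\<^sup>2 * (l * (norm z)\<^sup>2 - z \<bullet> (S *v z))"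
      by (simp add: w_def l_def matrix_vector_right_distrib matrix_vector_mult_scaleR
          inner_add_left inner_add_right inner_diff_left inner_commute algebra_simps power2_eq_square)
  qed
  have "w \<in> V"
    using inv xV V by (simp add: w_def subspace_diff subspace_scale)
  from w_orth[OF this] have "w = 0"
    by simp
  then show ?thesis
    using that[OF xV nx, of l] by (simp add: w_def)
qed

lemma symmetric_matrix_orthonormal_eigenbasis:
  fixes S :: "real^'n^'n"
  assumes sym: "transpose S = S" and "subspace V" and "\<And>x. x \<in> V \<Longrightarrow> S *v x \<in> V"
  shows "\<exists>B. B \<subseteq> V \<and> V \<subseteq> span B \<and> pairwise orthogonal B \<and>
    (\<forall>v\<in>B. norm v = 1 \<and> (\<exists>l. S *v v = l *\<^sub>R v))"
  using assms(2,3)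
proof (induction "dim V" arbitrary: V rule: less_induct)
  case (less V)
  show ?case
  proof (cases "V = {0}")
    case True
    then show ?thesis by (intro exI[of _ "{}"]) auto
  next
    case False
    obtain x l where xV: "x \<in> V" and nx: "norm x = 1" and ev: "S *v x = l *\<^sub>R x"
      using symmetric_matrix_eigenvector_in_invariant_subspace[OF sym less.prems False] by blast
    define W where "W = {y \<in> V. orthogonal x y}"
    have "subspace W"
      using less.prems(1) subspace_orthogonal_to_vector[of x]
      by (simp add: W_def Collect_conj_eq subspace_inter)
    moreover have "S *v y \<in> W" if "y \<in> W" for y
      using that less.prems(2) ev symmetric_matrix_inner[OF sym, of x y]
      by (simp add: W_def orthogonal_def)
    moreover have "dim W < dim V"
    proof (rule dim_psubset)
      have "x \<notin> W"
        using nx by (auto simp: W_def orthogonal_def norm_eq_1)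
      then have "W \<subset> V"
        using xV by (auto simp: W_def)
      then show "span W \<subset> span V"
        using \<open>subspace W\<close> less.prems(1) by (simp add: span_eq_iff[THEN iffD2])
    qed
    ultimately obtain B where B: "B \<subseteq> W" "W \<subseteq> span B" "pairwise orthogonal B"
      "\<forall>v\<in>B. norm v = 1 \<and> (\<exists>l. S *v v = l *\<^sub>R v)"
      using less.hyps[of W] by blast
    have "V \<subseteq> span (insert x B)"
    proof
      fix y assume "y \<in> V"
      then have "y - (x \<bullet> y) *\<^sub>R x \<in> W"
        using xV nx less.prems(1)
        by (simp add: W_def orthogonal_def subspace_diff subspace_scale inner_diff_right norm_eq_1)
      then have "y - (x \<bullet> y) *\<^sub>R x \<in> span (insert x B)"
        using B(2) span_mono[of B "insert x B"] by blast
      then show "y \<in> span (insert x B)"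
        by (metis diff_add_cancel span_add span_base span_scale insertI1)
    qed
    moreover have "pairwise orthogonal (insert x B)"
      using B(1,3) by (auto simp: pairwise_insert W_def orthogonal_commute)
    ultimately show ?thesis
      using B xV nx ev by (intro exI[of _ "insert x B"]) (auto simp: W_def)
  qed
qed

lemma sum_orthonormal_inner_scaleR:
  fixes B :: "'a::euclidean_space set"
  assumes "pairwise orthogonal B" "\<And>w. w \<in> B \<Longrightarrow> norm w = 1" "v \<in> B"
  shows "(\<Sum>w\<in>B. (c w * (w \<bullet> v)) *\<^sub>R w) = c v *\<^sub>R v"
proof -
  have "(\<Sum>w\<in>B. (c w * (w \<bullet> v)) *\<^sub>R w) = (\<Sum>w\<in>B. if w = v then c v *\<^sub>R v else 0)"
    using assms by (intro sum.cong) (auto simp: pairwise_def orthogonal_def norm_eq_1)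
  also have "\<dots> = c v *\<^sub>R v"
    using assms(3) pairwise_orthogonal_imp_finite[OF assms(1)] by simp
  finally show ?thesis .
qed

lemma matrix_eq_on_spanning_set:
  fixes A A' :: "real^'n^'m"
  assumes "UNIV \<subseteq> span B" "\<And>v. v \<in> B \<Longrightarrow> A *v v = A' *v v"
  shows "A = A'"
  using linear_eq_on_span[of "(*v) A" "(*v) A'" B] assms
  by (auto simp: matrix_eq)

lemma psd_mat_mult_self_eigenvector:
  fixes T :: "real^'n^'n"
  assumes psd: "psd_mat T" and ev: "(T ** T) *v v = l *\<^sub>R v" and "0 \<le> l"
  shows "T *v v = sqrt l *\<^sub>R v"
proof -
  define s where "s = sqrt l"
  define w where "w = T *v v - s *\<^sub>R v"
  have "s * s = l" "0 \<le> s"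
    using \<open>0 \<le> l\<close> by (auto simp: s_def)
  then have Tw: "T *v w = - s *\<^sub>R w"
    using ev by (simp add: w_def matrix_vector_mult_diff_distrib matrix_vector_mult_scaleR
        matrix_vector_mul_assoc algebra_simps)
  have "0 \<le> w \<bullet> (T *v w)"
    using psd by (simp add: psd_mat_def)
  then have "s = 0 \<or> w = 0"
    using \<open>0 \<le> s\<close> by (simp add: Tw mult_le_0_iff) (metis inner_gt_zero_iff not_le)
  then show ?thesis
  proof
    assume "s = 0"
    then have "(T *v v) \<bullet> (T *v v) = 0"
      using ev \<open>s * s = l\<close> psd symmetric_matrix_inner[of T "T *v v" v]
      by (simp add: psd_mat_def matrix_vector_mul_assoc inner_commute)
    then show ?thesis
      using \<open>s = 0\<close> by (simp add: s_def)
  qed (simp add: w_def s_def)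
qed

lemma ex1_psd_mat_sqrt:
  fixes S :: "real^'n^'n"
  assumes "psd_mat S"
  shows "\<exists>!R. psd_mat R \<and> R ** R = S"
proof -
  obtain B where span: "UNIV \<subseteq> span B" and orth: "pairwise orthogonal B"
    and unit: "\<And>v. v \<in> B \<Longrightarrow> norm v = 1"
    and eigen: "\<And>v. v \<in> B \<Longrightarrow> \<exists>l. S *v v = l *\<^sub>R v"
    using symmetric_matrix_orthonormal_eigenbasis[of S UNIV] assms
    by (auto simp: psd_mat_def subspace_UNIV)
  define l where "l v = v \<bullet> (S *v v)" for v
  have Sv: "S *v v = l v *\<^sub>R v" if "v \<in> B" for v
    using eigen[OF that] unit[OF that] by (auto simp: l_def norm_eq_1)
  have l_nonneg: "0 \<le> l v" for v
    using assms by (simp add: l_def psd_mat_def)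
  define R where "R = (\<chi> i j. \<Sum>w\<in>B. sqrt (l w) * w $ i * w $ j)"
  have R_sym: "transpose R = R"
    by (simp add: R_def transpose_def vec_eq_iff mult_ac)
  have R_mult: "R *v y = (\<Sum>w\<in>B. (sqrt (l w) * (w \<bullet> y)) *\<^sub>R w)" for y
    by (simp add: R_def vec_eq_iff matrix_vector_mult_def inner_vec_def sum_component
        scaleR_sum_left sum_distrib_left sum_distrib_right mult_ac)
      (auto intro: sum.swap)
  have Rv: "R *v v = sqrt (l v) *\<^sub>R v" if "v \<in> B" for v
    unfolding R_mult using sum_orthonormal_inner_scaleR[OF orth unit that] .
  have "psd_mat R"
  proof -
    have "x \<bullet> (R *v x) = (\<Sum>w\<in>B. sqrt (l w) * (w \<bullet> x)\<^sup>2)" for x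
      by (simp add: R_mult inner_sum_right inner_commute power2_eq_square mult_ac)
    then show ?thesis
      using R_sym l_nonneg by (simp add: psd_mat_def sum_nonneg)
  qed
  moreover have "R ** R = S"
  proof (rule matrix_eq_on_spanning_set[OF span])
    fix v assume "v \<in> B"
    have "(R ** R) *v v = (sqrt (l v) * sqrt (l v)) *\<^sub>R v"
      using Rv[OF \<open>v \<in> B\<close>] by (simp flip: matrix_vector_mul_assoc add: matrix_vector_mult_scaleR)
    then show "(R ** R) *v v = S *v v"
      using Sv[OF \<open>v \<in> B\<close>] l_nonneg[of v] by simp
  qed
  moreover have "T = R" if "psd_mat T" "T ** T = S" for T
    using span psd_mat_mult_self_eigenvector[OF that(1)] Sv Rv l_nonneg that(2)
    by (intro matrix_eq_on_spanning_set[of B]) auto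
  ultimately show ?thesis by blast
qed

lemma psd_mat_if_matrix_inv_pd:
  fixes S :: "real^'n^'n"
  assumes "transpose S = S" "invertible S" "pd_mat (matrix_inv S)"
  shows "psd_mat S"
  unfolding psd_mat_def
proof (intro conjI assms(1) allI)
  fix x
  have "S ** matrix_inv S = mat 1 \<and> matrix_inv S ** S = mat 1"
    unfolding matrix_inv_def by (rule someI_ex) (use assms(2) in \<open>simp add: invertible_def\<close>)
  then have "x \<bullet> (S *v x) = (S *v x) \<bullet> (matrix_inv S *v (S *v x))"
    by (simp add: matrix_vector_mul_assoc inner_commute)
  also have "\<dots> \<ge> 0"
    using assms(3) by (cases "S *v x = 0") (auto simp: pd_mat_def intro: less_imp_le)
  finally show "0 \<le> x \<bullet> (S *v x)" .
qed

section \<open>Operator-norm bounds\<close>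

lemma norm_matrix_vector_mult_le_opnorm:
  fixes A :: "real^'n^'m"
  shows "norm (A *v x) \<le> opnorm A * norm x"
  unfolding opnorm_def by (rule onorm[OF matrix_vector_mul_bounded_linear])

lemma norm_matrix_mult_vector_sq_le:
  fixes A :: "real^'n^'m" and B :: "real^'k^'n"
  shows "(norm ((A ** B) *v x))\<^sup>2 \<le> (opnorm A)\<^sup>2 * (norm (B *v x))\<^sup>2"
  using norm_matrix_vector_mult_le_opnorm[of A "B *v x"]
  by (simp flip: matrix_vector_mul_assoc power_mult_distrib add: power_mono)

lemma norm_transpose_mult_le:
  fixes A :: "real^'n^'m"
  assumes bound: "\<And>x. (norm (A *v x))\<^sup>2 \<le> c * (norm x)\<^sup>2"
  shows "(norm (transpose A *v y))\<^sup>2 \<le> c * (norm y)\<^sup>2"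
proof -
  define b where "b = transpose A *v y"
  obtain x :: "real^'n" where "norm x = 1"
    using norm_axis_1 by blast
  then have "0 \<le> c"
    using order_trans[OF zero_le_power2 bound[of x]] by simp
  have "(norm b)\<^sup>2 = y \<bullet> (A *v b)"
    unfolding power2_norm_eq_inner b_def by (rule transpose_mult_inner)
  also have "\<dots> \<le> norm y * norm (A *v b)"
    by (rule norm_cauchy_schwarz)
  finally have "((norm b)\<^sup>2)\<^sup>2 \<le> (norm y)\<^sup>2 * (norm (A *v b))\<^sup>2"
    by (metis power_mono power_mult_distrib zero_le_power2)
  also have "\<dots> \<le> (norm y)\<^sup>2 * (c * (norm b)\<^sup>2)"
    by (intro mult_left_mono bound) simp
  finally show ?thesis
    using \<open>0 \<le> c\<close> by (cases "b = 0") (simp_all add: b_def power2_eq_square mult_ac)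
qed

lemma norm_transpose_matrix_mult_le:
  fixes A :: "real^'n^'m" and B :: "real^'k^'n"
  assumes "opnorm A \<le> a" and B: "\<And>x. (norm (B *v x))\<^sup>2 \<le> c * (norm x)\<^sup>2"
  shows "(norm (transpose (A ** B) *v y))\<^sup>2 \<le> a\<^sup>2 * c * (norm y)\<^sup>2"
proof (rule norm_transpose_mult_le)
  fix x
  have "0 \<le> opnorm A"
    unfolding opnorm_def by (rule onorm_pos_le[OF matrix_vector_mul_bounded_linear])
  have "(norm ((A ** B) *v x))\<^sup>2 \<le> (opnorm A)\<^sup>2 * (norm (B *v x))\<^sup>2"
    by (rule norm_matrix_mult_vector_sq_le)
  also have "\<dots> \<le> a\<^sup>2 * (c * (norm x)\<^sup>2)"
    using \<open>0 \<le> opnorm A\<close> \<open>opnorm A \<le> a\<close> B by (intro mult_mono power_mono) auto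
  finally show "(norm ((A ** B) *v x))\<^sup>2 \<le> a\<^sup>2 * c * (norm x)\<^sup>2"
    by (simp add: mult_ac)
qed

lemma norm_matrix_sqrt_mult_le:
  fixes S :: "real^'n^'n"
  assumes "psd_mat S"
  shows "(norm (matrix_sqrt S *v x))\<^sup>2 \<le> opnorm S * (norm x)\<^sup>2"
proof -
  let ?R = "matrix_sqrt S"
  have R: "psd_mat ?R" "?R ** ?R = S"
    using theI'[OF ex1_psd_mat_sqrt[OF assms]] by (simp_all add: matrix_sqrt_def)
  have "(norm (?R *v x))\<^sup>2 = x \<bullet> (?R *v (?R *v x))"
    using R(1) by (simp add: psd_mat_def power2_norm_eq_inner symmetric_matrix_inner)
  also have "\<dots> = x \<bullet> (S *v x)"
    by (simp add: matrix_vector_mul_assoc R(2))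
  also have "\<dots> \<le> norm x * norm (S *v x)"
    by (rule norm_cauchy_schwarz)
  also have "\<dots> \<le> norm x * (opnorm S * norm x)"
    by (intro mult_left_mono norm_matrix_vector_mult_le_opnorm) simp
  finally show ?thesis
    by (simp add: power2_eq_square mult_ac)
qed

section \<open>Exponential moments of linear processes\<close>

lemma exp_mult_le_powr_tangent:
  fixes C p a :: real
  assumes "0 < C" "0 \<le> p" "p \<le> 1"
  shows "exp (p * a) \<le> C powr p + p * C powr (p - 1) * (exp a - C)"
proof -
  \<comment> \<open>convexity of \<open>exp\<close> between \<open>ln C\<close> and \<open>a\<close>, i.e. concavity of \<open>y powr p\<close> at \<open>y = C\<close>\<close>
  have "exp ((1 - p) * ln C + p * a) \<le> (1 - p) * exp (ln C) + p * exp a"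
    using convex_onD[OF exp_convex, of p "ln C" a] assms by simp
  then have "C powr (1 - p) * exp (p * a) \<le> (1 - p) * C + p * exp a"
    using assms by (simp add: powr_def exp_add mult.commute)
  then have "exp (p * a) \<le> ((1 - p) * C + p * exp a) * C powr (p - 1)"
    using assms by (simp add: powr_diff powr_minus_divide field_simps)
  also have "\<dots> = C powr p + p * C powr (p - 1) * (exp a - C)"
    using assms by (simp add: powr_diff field_simps)
  finally show ?thesis .
qed

lemma (in prob_space) nn_integral_exp_mult_le_powr:
  fixes f :: "'a \<Rightarrow> real"
  assumes f: "f \<in> borel_measurable M" and "0 < C" "0 \<le> p" "p \<le> 1"
    and bound: "(\<integral>\<^sup>+\<omega>. ennreal (exp (f \<omega>)) \<partial>M) \<le> ennreal C"
  shows "(\<integral>\<^sup>+\<omega>. ennreal (exp (p * f \<omega>)) \<partial>M) \<le> ennreal (C powr p)"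
proof -
  define c1 where "c1 = p * C powr (p - 1)"
  define c0 where "c0 = (1 - p) * C powr p"
  have "0 \<le> c1" "0 \<le> c0"
    using assms by (simp_all add: c1_def c0_def)
  have "(\<integral>\<^sup>+\<omega>. ennreal (exp (p * f \<omega>)) \<partial>M)
      \<le> (\<integral>\<^sup>+\<omega>. ennreal c1 * ennreal (exp (f \<omega>)) + ennreal c0 \<partial>M)"
  proof (rule nn_integral_mono)
    fix \<omega>
    have "exp (p * f \<omega>) \<le> c1 * exp (f \<omega>) + c0"
      using exp_mult_le_powr_tangent[OF \<open>0 < C\<close> \<open>0 \<le> p\<close> \<open>p \<le> 1\<close>, of "f \<omega>"] \<open>0 < C\<close>
      by (simp add: c1_def c0_def powr_diff field_simps)
    then show "ennreal (exp (p * f \<omega>)) \<le> ennreal c1 * ennreal (exp (f \<omega>)) + ennreal c0"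
      using \<open>0 \<le> c1\<close> \<open>0 \<le> c0\<close> by (simp flip: ennreal_mult ennreal_plus)
  qed
  also have "\<dots> = ennreal c1 * (\<integral>\<^sup>+\<omega>. ennreal (exp (f \<omega>)) \<partial>M) + ennreal c0"
    using f by (simp add: nn_integral_add nn_integral_cmult emeasure_space_1)
  also have "\<dots> \<le> ennreal c1 * ennreal C + ennreal c0"
    using bound by (intro add_mono mult_left_mono) auto
  also have "\<dots> = ennreal (C powr p)"
    using \<open>0 \<le> c1\<close> \<open>0 \<le> c0\<close> \<open>0 < C\<close>
    by (simp add: c1_def c0_def powr_diff field_simps flip: ennreal_mult ennreal_plus)
  finally show ?thesis .
qed

lemma (in prob_space) subgaussian_const_ge_1:
  fixes Y :: "'a \<Rightarrow> real^'n"
  assumes "0 \<le> iota"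
    and unit: "\<And>u. norm u = 1 \<Longrightarrow> (\<integral>\<^sup>+\<omega>. ennreal (exp (iota * (u \<bullet> Y \<omega>)\<^sup>2)) \<partial>M) \<le> ennreal C"
  shows "1 \<le> C"
proof -
  obtain u :: "real^'n" where "norm u = 1"
    using norm_axis_1 by blast
  have "(\<integral>\<^sup>+\<omega>. ennreal 1 \<partial>M) \<le> (\<integral>\<^sup>+\<omega>. ennreal (exp (iota * (u \<bullet> Y \<omega>)\<^sup>2)) \<partial>M)"
    using \<open>0 \<le> iota\<close> by (intro nn_integral_mono ennreal_leI) simp
  also have "\<dots> \<le> ennreal C"
    using unit[OF \<open>norm u = 1\<close>] .
  finally show ?thesis
    by (simp add: emeasure_space_1)
qed

lemma (in prob_space) subgaussian_inner_le:
  fixes Y :: "'a \<Rightarrow> real^'n"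
  assumes "0 \<le> iota"
    and unit: "\<And>u. norm u = 1 \<Longrightarrow> (\<integral>\<^sup>+\<omega>. ennreal (exp (iota * (u \<bullet> Y \<omega>)\<^sup>2)) \<partial>M) \<le> ennreal C"
    and r: "(norm r)\<^sup>2 \<le> c"
  shows "(\<integral>\<^sup>+\<omega>. ennreal (exp (iota / c * (r \<bullet> Y \<omega>)\<^sup>2)) \<partial>M) \<le> ennreal C"
proof (cases "r = 0")
  case True
  have "1 \<le> C"
    using \<open>0 \<le> iota\<close> unit by (rule subgaussian_const_ge_1)
  then show ?thesis
    using True by (simp add: emeasure_space_1)
next
  case False
  define v where "v = r /\<^sub>R norm r"
  have "0 < c"
    using False by (simp add: less_le_trans[OF _ r])
  have "(\<integral>\<^sup>+\<omega>. ennreal (exp (iota / c * (r \<bullet> Y \<omega>)\<^sup>2)) \<partial>M)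
      \<le> (\<integral>\<^sup>+\<omega>. ennreal (exp (iota * (v \<bullet> Y \<omega>)\<^sup>2)) \<partial>M)"
  proof (intro nn_integral_mono ennreal_leI exp_mono)
    fix \<omega>
    have "iota / c * (r \<bullet> Y \<omega>)\<^sup>2 = iota * ((norm r)\<^sup>2 / c) * (v \<bullet> Y \<omega>)\<^sup>2"
      using False by (simp add: v_def power_mult_distrib field_simps)
    also have "\<dots> \<le> iota * (v \<bullet> Y \<omega>)\<^sup>2"
      using r \<open>0 < c\<close> \<open>0 \<le> iota\<close> by (intro mult_right_mono mult_left_le) auto
    finally show "iota / c * (r \<bullet> Y \<omega>)\<^sup>2 \<le> iota * (v \<bullet> Y \<omega>)\<^sup>2" .
  qed
  also have "\<dots> \<le> ennreal C"
    using False by (intro unit) (simp add: v_def)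
  finally show ?thesis .
qed

lemma (in prob_space) nn_integral_prod_indep_vars_reindex:
  fixes Z :: "'i \<Rightarrow> 'a \<Rightarrow> 'b::topological_space" and h :: "'k \<Rightarrow> 'b \<Rightarrow> ennreal"
  assumes indep: "indep_vars (\<lambda>_. borel) Z UNIV" and "finite K" and inj: "inj_on g K"
    and h: "\<And>k. k \<in> K \<Longrightarrow> h k \<in> borel_measurable borel"
  shows "(\<integral>\<^sup>+\<omega>. (\<Prod>k\<in>K. h k (Z (g k) \<omega>)) \<partial>M) = (\<Prod>k\<in>K. \<integral>\<^sup>+\<omega>. h k (Z (g k) \<omega>) \<partial>M)"
proof -
  define Y where "Y i \<omega> = h (the_inv_into K g i) (Z i \<omega>)" for i \<omega>
  have "indep_vars (\<lambda>_. borel) Y (g ` K)"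
    unfolding Y_def using indep_vars_subset[OF indep subset_UNIV] h
    by (rule indep_vars_compose2) (auto simp: the_inv_into_f_f[OF inj])
  then have "(\<integral>\<^sup>+\<omega>. (\<Prod>i\<in>g ` K. Y i \<omega>) \<partial>M) = (\<Prod>i\<in>g ` K. \<integral>\<^sup>+\<omega>. Y i \<omega> \<partial>M)"
    using \<open>finite K\<close> by (intro indep_vars_nn_integral) auto
  then show ?thesis
    by (simp add: prod.reindex[OF inj] Y_def the_inv_into_f_f[OF inj])
qed

lemma nn_integral_le_if_AE_LIMSEQ:
  fixes f :: "nat \<Rightarrow> 'a \<Rightarrow> ennreal"
  assumes "\<And>N. f N \<in> borel_measurable M" and lim: "AE \<omega> in M. (\<lambda>N. f N \<omega>) \<longlonglongrightarrow> g \<omega>"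
    and bound: "\<And>N. (\<integral>\<^sup>+\<omega>. f N \<omega> \<partial>M) \<le> B"
  shows "(\<integral>\<^sup>+\<omega>. g \<omega> \<partial>M) \<le> B"
proof -
  have "(\<integral>\<^sup>+\<omega>. g \<omega> \<partial>M) = (\<integral>\<^sup>+\<omega>. liminf (\<lambda>N. f N \<omega>) \<partial>M)"
    using lim by (intro nn_integral_cong_AE) (auto elim!: eventually_mono simp: lim_imp_Liminf)
  also have "\<dots> \<le> liminf (\<lambda>N. \<integral>\<^sup>+\<omega>. f N \<omega> \<partial>M)"
    by (rule nn_integral_liminf) fact
  also have "\<dots> \<le> B"
    using bound by (intro Liminf_le always_eventually allI) simp_all
  finally show ?thesis .
qed

lemma geometric_partial_sum_le:
  fixes r :: real
  assumes "0 \<le> r" "r < 1"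
  shows "(\<Sum>k<N. r ^ k) \<le> 1 / (1 - r)"
  using assms by (simp add: sum_gp_strict divide_right_mono)

lemma square_sum_le_geometric_weighted:
  fixes y :: "nat \<Rightarrow> real"
  assumes "0 < r" "r < 1"
  shows "(\<Sum>k<N. y k)\<^sup>2 \<le> (\<Sum>k<N. (y k)\<^sup>2 / r ^ k) / (1 - r)"
proof -
  have "(\<Sum>k<N. y k)\<^sup>2 = (\<Sum>k<N. sqrt (r ^ k) * (y k / sqrt (r ^ k)))\<^sup>2"
    using assms by simp
  also have "\<dots> \<le> (\<Sum>k<N. (sqrt (r ^ k))\<^sup>2) * (\<Sum>k<N. (y k / sqrt (r ^ k))\<^sup>2)"
    by (rule Cauchy_Schwarz_ineq_sum)
  also have "\<dots> = (\<Sum>k<N. r ^ k) * (\<Sum>k<N. (y k)\<^sup>2 / r ^ k)"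
    using assms by (simp add: power_divide)
  also have "\<dots> \<le> 1 / (1 - r) * (\<Sum>k<N. (y k)\<^sup>2 / r ^ k)"
    using assms by (intro mult_right_mono geometric_partial_sum_le sum_nonneg) auto
  finally show ?thesis
    by simp
qed

lemma (in prob_space) nn_integral_exp_sq_linear_partial_sum_le:
  fixes Z :: "'i \<Rightarrow> 'a \<Rightarrow> real^'n" and g :: "nat \<Rightarrow> 'i" and b :: "nat \<Rightarrow> real^'n"
  assumes indep: "indep_vars (\<lambda>_. borel) Z UNIV" and "inj g" and "0 \<le> iota"
    and subG: "\<And>i u. norm u = 1 \<Longrightarrow>
      (\<integral>\<^sup>+\<omega>. ennreal (exp (iota * (u \<bullet> Z i \<omega>)\<^sup>2)) \<partial>M) \<le> ennreal C"
    and b: "\<And>k. (norm (b k))\<^sup>2 \<le> c * r ^ (2 * k)" and "0 < r" "r < 1"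
  shows "(\<integral>\<^sup>+\<omega>. ennreal (exp (iota * (1 - r) / c * (\<Sum>k<N. b k \<bullet> Z (g k) \<omega>)\<^sup>2)) \<partial>M)
    \<le> ennreal (C powr (1 / (1 - r)))"
proof -
  have [measurable]: "Z i \<in> borel_measurable M" for i
    using indep by (simp add: indep_vars_def)
  have "1 \<le> C"
    using \<open>0 \<le> iota\<close> subG by (rule subgaussian_const_ge_1)
  have "0 \<le> c"
    using order_trans[OF zero_le_power2 b[of 0]] by simp
  define f where "f k y = iota / (c * r ^ (2 * k)) * (b k \<bullet> y)\<^sup>2" for k y
  have f_meas[measurable]: "f k \<in> borel_measurable borel" for k
    unfolding f_def by measurable
  have pointwise: "iota * (1 - r) / c * (\<Sum>k<N. b k \<bullet> Z (g k) \<omega>)\<^sup>2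
      \<le> (\<Sum>k<N. r ^ k * f k (Z (g k) \<omega>))" for \<omega>
  proof -
    have "iota * (1 - r) / c * (\<Sum>k<N. b k \<bullet> Z (g k) \<omega>)\<^sup>2
        \<le> iota * (1 - r) / c * ((\<Sum>k<N. (b k \<bullet> Z (g k) \<omega>)\<^sup>2 / r ^ k) / (1 - r))"
      using \<open>0 \<le> iota\<close> \<open>0 \<le> c\<close> \<open>r < 1\<close> \<open>0 < r\<close>
      by (intro mult_left_mono square_sum_le_geometric_weighted) auto
    also have "\<dots> = iota / c * (\<Sum>k<N. (b k \<bullet> Z (g k) \<omega>)\<^sup>2 / r ^ k)"
      using \<open>r < 1\<close> by (cases "c = 0") (simp_all add: field_simps)
    also have "\<dots> = (\<Sum>k<N. iota / c * ((b k \<bullet> Z (g k) \<omega>)\<^sup>2 / r ^ k))"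
      by (simp add: sum_distrib_left)
    also have "\<dots> = (\<Sum>k<N. r ^ k * f k (Z (g k) \<omega>))"
      using \<open>0 < r\<close> unfolding f_def
      by (intro sum.cong refl)
        (cases "c = 0"; simp add: power_mult power_mult_distrib field_simps power2_eq_square)
    finally show ?thesis .
  qed
  have factor: "(\<integral>\<^sup>+\<omega>. ennreal (exp (r ^ k * f k (Z (g k) \<omega>))) \<partial>M) \<le> ennreal (C powr (r ^ k))"
    for k
  proof (rule nn_integral_exp_mult_le_powr)
    show "(\<integral>\<^sup>+\<omega>. ennreal (exp (f k (Z (g k) \<omega>))) \<partial>M) \<le> ennreal C"
      unfolding f_def using \<open>0 \<le> iota\<close> subG b by (rule subgaussian_inner_le)
  qed (use \<open>1 \<le> C\<close> \<open>0 < r\<close> \<open>r < 1\<close> in \<open>simp_all add: power_le_one\<close>)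
  have "(\<integral>\<^sup>+\<omega>. ennreal (exp (iota * (1 - r) / c * (\<Sum>k<N. b k \<bullet> Z (g k) \<omega>)\<^sup>2)) \<partial>M)
      \<le> (\<integral>\<^sup>+\<omega>. (\<Prod>k<N. ennreal (exp (r ^ k * f k (Z (g k) \<omega>)))) \<partial>M)"
    using pointwise by (intro nn_integral_mono) (simp add: prod_ennreal flip: exp_sum)
  also have "\<dots> = (\<Prod>k<N. \<integral>\<^sup>+\<omega>. ennreal (exp (r ^ k * f k (Z (g k) \<omega>))) \<partial>M)"
    using \<open>inj g\<close> by (intro nn_integral_prod_indep_vars_reindex[OF indep]) (auto intro: inj_on_subset)
  also have "\<dots> \<le> (\<Prod>k<N. ennreal (C powr (r ^ k)))"
    by (rule prod_mono_ennreal) (rule factor)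
  also have "\<dots> = ennreal (C powr (\<Sum>k<N. r ^ k))"
    using \<open>1 \<le> C\<close> by (simp add: prod_ennreal powr_sum)
  also have "\<dots> \<le> ennreal (C powr (1 / (1 - r)))"
    using \<open>1 \<le> C\<close> \<open>0 < r\<close> \<open>r < 1\<close> by (intro ennreal_leI powr_mono geometric_partial_sum_le) auto
  finally show ?thesis .
qed

lemma (in prob_space) nn_integral_exp_sq_linear_process_le:
  fixes Z :: "'i \<Rightarrow> 'a \<Rightarrow> real^'n" and g :: "nat \<Rightarrow> 'i" and b :: "nat \<Rightarrow> real^'n"
  assumes indep: "indep_vars (\<lambda>_. borel) Z UNIV" and "inj g" and "0 \<le> iota"
    and "\<And>i u. norm u = 1 \<Longrightarrow>
      (\<integral>\<^sup>+\<omega>. ennreal (exp (iota * (u \<bullet> Z i \<omega>)\<^sup>2)) \<partial>M) \<le> ennreal C"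
    and "\<And>k. (norm (b k))\<^sup>2 \<le> c * r ^ (2 * k)" and "0 < r" "r < 1"
    and sums: "AE \<omega> in M. (\<lambda>k. b k \<bullet> Z (g k) \<omega>) sums x \<omega>"
  shows "(\<integral>\<^sup>+\<omega>. ennreal (exp (iota * (1 - r) / c * (x \<omega>)\<^sup>2)) \<partial>M) \<le> ennreal (C powr (1 / (1 - r)))"
proof (rule nn_integral_le_if_AE_LIMSEQ)
  have [measurable]: "Z i \<in> borel_measurable M" for i
    using indep by (simp add: indep_vars_def)
  show "(\<lambda>\<omega>. ennreal (exp (iota * (1 - r) / c * (\<Sum>k<N. b k \<bullet> Z (g k) \<omega>)\<^sup>2))) \<in> borel_measurable M"
    for N by measurable
  show "AE \<omega> in M. (\<lambda>N. ennreal (exp (iota * (1 - r) / c * (\<Sum>k<N. b k \<bullet> Z (g k) \<omega>)\<^sup>2)))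
      \<longlonglongrightarrow> ennreal (exp (iota * (1 - r) / c * (x \<omega>)\<^sup>2))"
    using sums unfolding sums_def
    by eventually_elim (intro tendsto_ennrealI tendsto_exp tendsto_mult_left tendsto_power)
qed (rule nn_integral_exp_sq_linear_partial_sum_le[OF assms(1-7)])

theorem lemmaB1:
  fixes M :: "'a measure"
    and n :: nat
    and A Sig :: "real \<Rightarrow> real^'d^'d"
    and eps e X :: "int \<Rightarrow> 'a \<Rightarrow> real^'d"
    and Phi :: "int \<Rightarrow> nat \<Rightarrow> real^'d^'d"
    and iota1 C0 C1 rho :: real
  assumes P: "prob_space M"
    and n: "n \<ge> 1"
    (* Assumption 1 (i) *)
    and A_stab: "\<forall>\<tau>\<in>{0..1}. \<forall>z::complex. norm z \<le> 1 \<longrightarrow>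
                   det (mat 1 - (\<chi> i j. complex_of_real (A \<tau> $ i $ j) * z)) \<noteq> 0"
    and A_C2: "\<forall>i j. C2_on01 (\<lambda>\<tau>. A \<tau> $ i $ j)"
    (* Assumption 1 (ii) *)
    and Sig_sym: "\<forall>\<tau>\<in>{0..1}. transpose (Sig \<tau>) = Sig \<tau>"
    and Om_pd: "\<forall>\<tau>\<in>{0..1}. invertible (Sig \<tau>) \<and> pd_mat (matrix_inv (Sig \<tau>))"
    and Sig_bdd: "bdd_above ((\<lambda>\<tau>. opnorm (Sig \<tau>)) ` {0..1})"
    and Sig_C2: "\<forall>i j. C2_on01 (\<lambda>\<tau>. Sig \<tau> $ i $ j)"
    and Om_C2: "\<forall>i j. C2_on01 (\<lambda>\<tau>. matrix_inv (Sig \<tau>) $ i $ j)"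
    (* innovations eps_t: i.i.d., mean zero, identity covariance *)
    and eps_rv: "\<forall>t. eps t \<in> borel_measurable M"
    and eps_indep: "prob_space.indep_vars M (\<lambda>_. borel) eps UNIV"
    and eps_ident: "\<forall>t. distr M borel (eps t) = distr M borel (eps 0)"
    and eps_mean: "\<forall>t i. integrable M (\<lambda>\<omega>. eps t \<omega> $ i) \<and> (\<integral>\<omega>. eps t \<omega> $ i \<partial>M) = 0"
    and eps_cov: "\<forall>t i j. integrable M (\<lambda>\<omega>. eps t \<omega> $ i * eps t \<omega> $ j) \<and>
                   (\<integral>\<omega>. eps t \<omega> $ i * eps t \<omega> $ j \<partial>M) = (if i = j then 1 else 0)"
    (* Assumption 1 (iii) *)
    and iota1: "iota1 > 0" and C0: "C0 > 0"
    and subG: "\<forall>t u. norm u = 1 \<longrightarrow>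
                 (\<integral>\<^sup>+\<omega>. ennreal (exp (iota1 * (u \<bullet> eps t \<omega>)\<^sup>2)) \<partial>M) \<le> ennreal C0"
    (* model *)
    and e_def: "\<forall>t \<omega>. e t \<omega> = matrix_sqrt (Sig (tau n t)) *v eps t \<omega>"
    and X_rec: "\<forall>t\<in>{1..int n}. \<forall>\<omega>. X t \<omega> = A (tau n t) *v X (t - 1) \<omega> + e t \<omega>"
    (* standing assumption: causal representation with geometric decay *)
    and X_MA: "\<forall>t\<in>{0..int n}. AE \<omega> in M. (\<lambda>k. Phi t k *v e (t - int k) \<omega>) sums X t \<omega>"
    and C1: "C1 > 0" and rho: "0 < rho" "rho < 1"
    and Phi_bd: "\<forall>t\<in>{0..int n}. \<forall>k. opnorm (Phi t k) \<le> C1 * rho ^ k"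
  shows "let Cstar = Max ((\<lambda>t. opnorm (Sig (tau n t))) ` {1..int n});
             iota2 = iota1 / Cstar;
             iota3 = iota1 * (1 - rho) / (C1\<^sup>2 * Cstar)
         in (\<forall>u. norm u = 1 \<longrightarrow> (\<forall>t\<in>{1..int n}.
                (\<integral>\<^sup>+\<omega>. ennreal (exp (iota2 * (u \<bullet> e t \<omega>)\<^sup>2)) \<partial>M) \<le> ennreal C0))
          \<and> (\<forall>t\<in>{1..int n}. \<forall>i.
                (\<integral>\<^sup>+\<omega>. ennreal (exp (iota3 * (X t \<omega> $ i)\<^sup>2)) \<partial>M)
                   \<le> ennreal (C0 powr (1 / (1 - rho))))"
proof -
  interpret prob_space M
    by (rule P)
  define Cs where "Cs = Max ((\<lambda>t. opnorm (Sig (tau n t))) ` {1..int n})"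
  define R where "R s = matrix_sqrt (Sig (tau n s))" for s
  have Sig_bound: "psd_mat (Sig (tau n s)) \<and> opnorm (Sig (tau n s)) \<le> Cs" if "s \<le> int n" for s
  proof -
    \<comment> \<open>pre-sample times share the covariance of time 1\<close>
    have "tau n s = tau n (max s 1)" "max s 1 \<in> {1..int n}"
      using n that by (auto simp: tau_def)
    then have "tau n s \<in> {0..1}" "opnorm (Sig (tau n s)) \<le> Cs"
      using n by (auto simp: tau_def Cs_def divide_le_eq intro!: Max_ge)
    then show ?thesis
      using Sig_sym Om_pd by (auto intro: psd_mat_if_matrix_inv_pd)
  qed
  have R_bound: "(norm (R s *v x))\<^sup>2 \<le> Cs * (norm x)\<^sup>2" if "s \<le> int n" for s x
    using norm_matrix_sqrt_mult_le[of _ x] Sig_bound[OF that] unfolding R_def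
    by (meson order_trans mult_right_mono zero_le_power2)
  have innovation: "(\<integral>\<^sup>+\<omega>. ennreal (exp (iota1 / Cs * (u \<bullet> e t \<omega>)\<^sup>2)) \<partial>M) \<le> ennreal C0"
    if "norm u = 1" "t \<in> {1..int n}" for u t
  proof -
    have "u \<bullet> e t \<omega> = (transpose (R t) *v u) \<bullet> eps t \<omega>" for \<omega>
      by (simp only: e_def R_def transpose_mult_inner)
    moreover have "(norm (transpose (R t) *v u))\<^sup>2 \<le> Cs"
      using norm_transpose_mult_le[OF R_bound, of t u] that by simp
    ultimately show ?thesis
      using iota1 subG subgaussian_inner_le[of iota1 "eps t" C0] by simp
  qed
  have process: "(\<integral>\<^sup>+\<omega>. ennreal (exp (iota1 * (1 - rho) / (C1\<^sup>2 * Cs) * (X t \<omega> $ i)\<^sup>2)) \<partial>M)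
      \<le> ennreal (C0 powr (1 / (1 - rho)))" if "t \<in> {1..int n}" for t i
  proof (rule nn_integral_exp_sq_linear_process_le[OF eps_indep])
    define b where "b k = transpose (Phi t k ** R (t - int k)) *v axis i 1" for k
    have "(norm (b k))\<^sup>2 \<le> (C1 * rho ^ k)\<^sup>2 * Cs * (norm (axis i 1 :: real^'d))\<^sup>2" for k
      unfolding b_def using that Phi_bd by (intro norm_transpose_matrix_mult_le R_bound) auto
    then show "(norm (b k))\<^sup>2 \<le> C1\<^sup>2 * Cs * rho ^ (2 * k)" for k
      by (simp add: power_mult_distrib power_mult mult_ac)
    have "(Phi t k *v e (t - int k) \<omega>) $ i = b k \<bullet> eps (t - int k) \<omega>" for k \<omega>
      unfolding b_def R_def e_def[rule_format] matrix_vector_mul_assoc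
      by (rule matrix_vector_mult_component_inner)
    moreover have "AE \<omega> in M. (\<lambda>k. Phi t k *v e (t - int k) \<omega>) sums X t \<omega>"
      using X_MA that by auto
    ultimately show "AE \<omega> in M. (\<lambda>k. b k \<bullet> eps (t - int k) \<omega>) sums X t \<omega> $ i"
      by (auto elim!: eventually_mono dest: sums_vec_nth[where i = i])
  qed (use iota1 subG rho in \<open>auto simp: inj_def\<close>)
  show ?thesis
    unfolding Let_def Cs_def[symmetric] using innovation process by blast
qed

end
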